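(* Let $R$ be a commutative ring with identity and $M$ a non-zero comultiplication $R$-module such that $G'(M)$ is non-null. Then $G'(M)$ is an empty graph (has no edges) if and only if $\mathrm{Min}(M)=\{S_1,S_2\}$ with $S_1\neq S_2$ and both $M/S_1$ and $M/S_2$ are finitely cogenerated uniform $R$-modules.
   Context: An $R$-module $M$ is a comultiplication module if for every submodule $N$ of $M$ there is an ideal $I$ of $R$ with $N=\mathrm{Ann}_M(I)$. A submodule $N$ of $M$ is large if $N\cap L\neq 0$ for every non-zero submodule $L$ of $M$. $\mathrm{Min}(M)$ is the set of minimal submodules of $M$. The large sum graph $G'(M)$ has as vertex set the set of all non-zero non-large submodules of $M$, and two distinct vertices $N,K$ are adjacent iff $N+K$ is non-large in $M$. A module is uniform if any two non-zero submodules have non-zero intersection; a module $X$ is finitely cogenerated if whenever a family of submodules of $X$ has zero intersection, some finite subfamily has zero intersection. *)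

theory Defs
  imports "HOL-Algebra.Module" "HOL-Algebra.AbelCoset" "HOL-Algebra.Ideal"
begin

definition submods :: "('a, 'c) ring_scheme \<Rightarrow> ('a, 'b, 'd) module_scheme \<Rightarrow> 'b set set" where
  "submods R M = {N. submodule N R M}"

definition AnnM :: "('a, 'b, 'd) module_scheme \<Rightarrow> 'a set \<Rightarrow> 'b set" where
  "AnnM M I = {m \<in> carrier M. \<forall>r\<in>I. r \<odot>\<^bsub>M\<^esub> m = \<zero>\<^bsub>M\<^esub>}"

definition comultiplication_module :: "('a, 'c) ring_scheme \<Rightarrow> ('a, 'b, 'd) module_scheme \<Rightarrow> bool" where
  "comultiplication_module R M \<longleftrightarrow>
     (\<forall>N. submodule N R M \<longrightarrow> (\<exists>I. ideal I R \<and> N = AnnM M I))"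

definition large_submodule :: "('a, 'c) ring_scheme \<Rightarrow> ('a, 'b, 'd) module_scheme \<Rightarrow> 'b set \<Rightarrow> bool" where
  "large_submodule R M N \<longleftrightarrow> submodule N R M \<and>
     (\<forall>L. submodule L R M \<and> L \<noteq> {\<zero>\<^bsub>M\<^esub>} \<longrightarrow> N \<inter> L \<noteq> {\<zero>\<^bsub>M\<^esub>})"

definition MinSub :: "('a, 'c) ring_scheme \<Rightarrow> ('a, 'b, 'd) module_scheme \<Rightarrow> 'b set set" where
  "MinSub R M = {N. submodule N R M \<and> N \<noteq> {\<zero>\<^bsub>M\<^esub>} \<and>
     (\<forall>K. submodule K R M \<and> K \<subseteq> N \<and> K \<noteq> {\<zero>\<^bsub>M\<^esub>} \<longrightarrow> K = N)}"

definition LSG_vertices :: "('a, 'c) ring_scheme \<Rightarrow> ('a, 'b, 'd) module_scheme \<Rightarrow> 'b set set" where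
  "LSG_vertices R M = {N. submodule N R M \<and> N \<noteq> {\<zero>\<^bsub>M\<^esub>} \<and> \<not> large_submodule R M N}"

definition LSG_adj :: "('a, 'c) ring_scheme \<Rightarrow> ('a, 'b, 'd) module_scheme \<Rightarrow> 'b set \<Rightarrow> 'b set \<Rightarrow> bool" where
  "LSG_adj R M N K \<longleftrightarrow> N \<in> LSG_vertices R M \<and> K \<in> LSG_vertices R M \<and> N \<noteq> K \<and>
     \<not> large_submodule R M (N <+>\<^bsub>M\<^esub> K)"

definition LSG_nonnull :: "('a, 'c) ring_scheme \<Rightarrow> ('a, 'b, 'd) module_scheme \<Rightarrow> bool" where
  "LSG_nonnull R M \<longleftrightarrow> LSG_vertices R M \<noteq> {}"

definition LSG_empty :: "('a, 'c) ring_scheme \<Rightarrow> ('a, 'b, 'd) module_scheme \<Rightarrow> bool" where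
  "LSG_empty R M \<longleftrightarrow> (\<forall>N K. \<not> LSG_adj R M N K)"

definition quot_module :: "('a, 'c) ring_scheme \<Rightarrow> ('a, 'b, 'd) module_scheme \<Rightarrow> 'b set \<Rightarrow> ('a, 'b set) module" where
  "quot_module R M S =
     \<lparr> carrier = a_rcosets\<^bsub>M\<^esub> S,
       mult = (\<lambda>X Y. S),
       one = S,
       zero = S,
       add = (\<lambda>X Y. X <+>\<^bsub>M\<^esub> Y),
       smult = (\<lambda>r X. ((\<lambda>x. r \<odot>\<^bsub>M\<^esub> x) ` X) <+>\<^bsub>M\<^esub> S) \<rparr>"

definition uniform_module :: "('a, 'c) ring_scheme \<Rightarrow> ('a, 'b, 'd) module_scheme \<Rightarrow> bool" where
  "uniform_module R X \<longleftrightarrow>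
     (\<forall>A B. submodule A R X \<and> submodule B R X \<and> A \<noteq> {\<zero>\<^bsub>X\<^esub>} \<and> B \<noteq> {\<zero>\<^bsub>X\<^esub>}
        \<longrightarrow> A \<inter> B \<noteq> {\<zero>\<^bsub>X\<^esub>})"

(* finitely cogenerated module: every family of submodules with zero intersection
   has a finite subfamily with zero intersection (intersections taken inside carrier X,
   so the empty subfamily has intersection X) *)
definition finitely_cogenerated :: "('a, 'c) ring_scheme \<Rightarrow> ('a, 'b, 'd) module_scheme \<Rightarrow> bool" where
  "finitely_cogenerated R X \<longleftrightarrow>
     (\<forall>F. F \<subseteq> submods R X \<and> carrier X \<inter> \<Inter>F = {\<zero>\<^bsub>X\<^esub>} \<longrightarrow>
        (\<exists>F0. F0 \<subseteq> F \<and> finite F0 \<and> carrier X \<inter> \<Inter>F0 = {\<zero>\<^bsub>X\<^esub>}))"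

end

theory Submission
  imports Defs
begin

text \<open>
  If \<open>G'(M)\<close> has no edges, every vertex is a minimal submodule: a submodule of a non-large
  submodule \<open>V\<close> is non-large and its sum with \<open>V\<close> is \<open>V\<close>. A vertex \<open>V\<close> meets some non-zero
  \<open>L\<close> trivially; both are minimal, \<open>V + L\<close> is large, and because every submodule of a
  comultiplication module is an annihilator, a minimal submodule meeting \<open>V + L\<close> must be
  \<open>V\<close> or \<open>L\<close>. So \<open>Min(M) = {V, L}\<close>, and every non-zero submodule of \<open>M/V\<close> pulls back to a
  large submodule, so contains the image of \<open>L\<close>; a module with a non-zero element common to all
  non-zero submodules is uniform and finitely cogenerated.

  Conversely, uniformity of \<open>M/S\<^sub>1\<close> together with the annihilator property forces every non-zero
  submodule to contain \<open>S\<^sub>1\<close> or \<open>S\<^sub>2\<close>. Hence \<open>S\<^sub>1 + S\<^sub>2\<close> is large, the only vertices are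
  \<open>S\<^sub>1\<close> and \<open>S\<^sub>2\<close>, and they are not adjacent.
\<close>

lemma uniform_moduleD:
  "uniform_module R X \<Longrightarrow> submodule A R X \<Longrightarrow> submodule B R X
    \<Longrightarrow> A \<noteq> {\<zero>\<^bsub>X\<^esub>} \<Longrightarrow> B \<noteq> {\<zero>\<^bsub>X\<^esub>} \<Longrightarrow> A \<inter> B \<noteq> {\<zero>\<^bsub>X\<^esub>}"
  unfolding uniform_module_def by blast

lemma uniform_module_if_common_nonzero:
  assumes "x \<noteq> \<zero>\<^bsub>X\<^esub>" and "\<And>U. submodule U R X \<Longrightarrow> U \<noteq> {\<zero>\<^bsub>X\<^esub>} \<Longrightarrow> x \<in> U"
  shows "uniform_module R X"
  using assms unfolding uniform_module_def by blast

lemma finitely_cogenerated_if_common_nonzero: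
  assumes x: "x \<in> carrier X" "x \<noteq> \<zero>\<^bsub>X\<^esub>"
    and common: "\<And>U. submodule U R X \<Longrightarrow> U \<noteq> {\<zero>\<^bsub>X\<^esub>} \<Longrightarrow> x \<in> U"
  shows "finitely_cogenerated R X"
  unfolding finitely_cogenerated_def
proof (intro allI impI)
  fix F assume F: "F \<subseteq> submods R X \<and> carrier X \<inter> \<Inter> F = {\<zero>\<^bsub>X\<^esub>}"
  then obtain U where U: "U \<in> F" "x \<notin> U"
    using x by blast
  then have "U = {\<zero>\<^bsub>X\<^esub>}"
    using F common by (auto simp: submods_def)
  moreover have "\<zero>\<^bsub>X\<^esub> \<in> carrier X"
    using F by blast
  ultimately show "\<exists>F0\<subseteq>F. finite F0 \<and> carrier X \<inter> \<Inter> F0 = {\<zero>\<^bsub>X\<^esub>}"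
    using U(1) by (intro exI[of _ "{U}"]) auto
qed

lemma quot_module_simps:
  "carrier (quot_module R M S) = a_rcosets\<^bsub>M\<^esub> S"
  "\<zero>\<^bsub>quot_module R M S\<^esub> = S"
  "X \<oplus>\<^bsub>quot_module R M S\<^esub> Y = X <+>\<^bsub>M\<^esub> Y"
  "r \<odot>\<^bsub>quot_module R M S\<^esub> X = ((\<lambda>x. r \<odot>\<^bsub>M\<^esub> x) ` X) <+>\<^bsub>M\<^esub> S"
  "carrier (add_monoid (quot_module R M S)) = a_rcosets\<^bsub>M\<^esub> S"
  "\<one>\<^bsub>add_monoid (quot_module R M S)\<^esub> = S"
  "X \<otimes>\<^bsub>add_monoid (quot_module R M S)\<^esub> Y = X <+>\<^bsub>M\<^esub> Y"
  by (simp_all add: quot_module_def)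

lemma quot_module_add_inv:
  "inv\<^bsub>add_monoid (quot_module R M S)\<^esub> X = inv\<^bsub>M A_Mod S\<^esub> X"
  by (simp add: m_inv_def quot_module_def A_FactGroup_def' set_add_def)

context module
begin

lemmas submodule_subset = submoduleE(1)
lemmas submodule_neg_closed = submoduleE(3)
lemmas submodule_smult_closed = submoduleE(4)
lemmas submodule_add_closed = submoduleE(5)

lemma submodule_zero_closed: "submodule S R M \<Longrightarrow> \<zero>\<^bsub>M\<^esub> \<in> S"
  by (metis additive_subgroup.intro additive_subgroup.zero_closed submodule.axioms(1))

lemma submodule_abelian_subgroup: "submodule S R M \<Longrightarrow> abelian_subgroup S M"
  by (meson abelian_group_axioms abelian_subgroupI3 additive_subgroup.intro submodule.axioms(1))

lemma submodule_Int: "submodule A R M \<Longrightarrow> submodule B R M \<Longrightarrow> submodule (A \<inter> B) R M"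
  by (rule submoduleI)
    (auto dest: submodule_subset intro: submodule_zero_closed submodule_add_closed
      submodule_neg_closed submodule_smult_closed)

lemma set_add_memE:
  assumes "x \<in> A <+>\<^bsub>M\<^esub> B"
  obtains a b where "a \<in> A" "b \<in> B" "x = a \<oplus>\<^bsub>M\<^esub> b"
  using assms unfolding set_add_def' by blast

lemma set_add_memI: "a \<in> A \<Longrightarrow> b \<in> B \<Longrightarrow> a \<oplus>\<^bsub>M\<^esub> b \<in> A <+>\<^bsub>M\<^esub> B"
  unfolding set_add_def' by blast

lemma submodule_set_add:
  assumes A: "submodule A R M" and B: "submodule B R M"
  shows "submodule (A <+>\<^bsub>M\<^esub> B) R M"
proof (intro submodule.intro submodule_axioms.intro)
  show "subgroup (A <+>\<^bsub>M\<^esub> B) (add_monoid M)"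
    using M.add_additive_subgroups[of A B] submodule.axioms(1)[OF A] submodule.axioms(1)[OF B]
    by (simp add: additive_subgroup_def)
  show "r \<odot>\<^bsub>M\<^esub> x \<in> A <+>\<^bsub>M\<^esub> B" if r: "r \<in> carrier R" and x: "x \<in> A <+>\<^bsub>M\<^esub> B" for r x
  proof -
    obtain a b where ab: "a \<in> A" "b \<in> B" "x = a \<oplus>\<^bsub>M\<^esub> b"
      using x by (rule set_add_memE)
    then have "r \<odot>\<^bsub>M\<^esub> x = r \<odot>\<^bsub>M\<^esub> a \<oplus>\<^bsub>M\<^esub> r \<odot>\<^bsub>M\<^esub> b"
      using submodule_subset[OF A] submodule_subset[OF B] r by (simp add: subsetD smult_r_distr)
    then show ?thesis
      using ab r by (simp add: set_add_memI submodule_smult_closed[OF A] submodule_smult_closed[OF B])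
  qed
qed

lemma set_add_upper1: "submodule B R M \<Longrightarrow> A \<subseteq> carrier M \<Longrightarrow> A \<subseteq> A <+>\<^bsub>M\<^esub> B"
  using set_add_memI[of _ A "\<zero>\<^bsub>M\<^esub>" B] by (force dest: submodule_zero_closed)

lemma set_add_commute_subset:
  "A \<subseteq> carrier M \<Longrightarrow> B \<subseteq> carrier M \<Longrightarrow> A <+>\<^bsub>M\<^esub> B \<subseteq> B <+>\<^bsub>M\<^esub> A"
proof
  fix x assume A: "A \<subseteq> carrier M" and B: "B \<subseteq> carrier M" and x: "x \<in> A <+>\<^bsub>M\<^esub> B"
  from x obtain a b where "a \<in> A" "b \<in> B" "x = a \<oplus>\<^bsub>M\<^esub> b" by (rule set_add_memE)
  then show "x \<in> B <+>\<^bsub>M\<^esub> A"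
    using A B a_comm[of a b] set_add_memI[of b B a A] by (simp add: subsetD)
qed

lemma set_add_commute:
  "A \<subseteq> carrier M \<Longrightarrow> B \<subseteq> carrier M \<Longrightarrow> A <+>\<^bsub>M\<^esub> B = B <+>\<^bsub>M\<^esub> A"
  by (simp add: set_add_commute_subset subset_antisym)

lemma set_add_upper2: "submodule A R M \<Longrightarrow> B \<subseteq> carrier M \<Longrightarrow> B \<subseteq> A <+>\<^bsub>M\<^esub> B"
  by (metis set_add_commute set_add_upper1 submodule_subset)

lemma set_add_least: "submodule V R M \<Longrightarrow> A \<subseteq> V \<Longrightarrow> B \<subseteq> V \<Longrightarrow> A <+>\<^bsub>M\<^esub> B \<subseteq> V"
  by (auto elim!: set_add_memE intro: submodule_add_closed)

lemma submodule_nonzero_iff: "submodule P R M \<Longrightarrow> P \<noteq> {\<zero>\<^bsub>M\<^esub>} \<longleftrightarrow> (\<exists>x\<in>P. x \<noteq> \<zero>\<^bsub>M\<^esub>)"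
  using submodule_zero_closed by blast

lemma set_add_absorb:
  "submodule K R M \<Longrightarrow> submodule V R M \<Longrightarrow> K \<subseteq> V \<Longrightarrow> K <+>\<^bsub>M\<^esub> V = V"
  by (simp add: set_add_least set_add_upper2 submodule_subset subset_antisym)

context
  fixes S assumes S: "submodule S R M"
begin

interpretation S: abelian_subgroup S M
  using S by (rule submodule_abelian_subgroup)

lemma coset_eq_self_iff: "x \<in> carrier M \<Longrightarrow> S +>\<^bsub>M\<^esub> x = S \<longleftrightarrow> x \<in> S"
  using S.a_rcos_self S.a_rcos_const by fastforce

lemma coset_eqE:
  assumes "x \<in> carrier M" "S +>\<^bsub>M\<^esub> x = S +>\<^bsub>M\<^esub> y"
  obtains t where "t \<in> S" "x = t \<oplus>\<^bsub>M\<^esub> y"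
  using S.a_rcos_self[of x] assms unfolding a_r_coset_def' by auto

lemma coset_in_quot_carrier: "x \<in> carrier M \<Longrightarrow> S +>\<^bsub>M\<^esub> x \<in> carrier (quot_module R M S)"
  using S.a_subset by (simp add: quot_module_simps a_rcosetsI)

lemma quot_smult_coset:
  assumes r: "r \<in> carrier R" and x: "x \<in> carrier M"
  shows "r \<odot>\<^bsub>quot_module R M S\<^esub> (S +>\<^bsub>M\<^esub> x) = S +>\<^bsub>M\<^esub> (r \<odot>\<^bsub>M\<^esub> x)"
  unfolding quot_module_simps
proof
  show "(\<lambda>x. r \<odot>\<^bsub>M\<^esub> x) ` (S +>\<^bsub>M\<^esub> x) <+>\<^bsub>M\<^esub> S \<subseteq> S +>\<^bsub>M\<^esub> r \<odot>\<^bsub>M\<^esub> x"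
  proof
    fix z assume "z \<in> (\<lambda>x. r \<odot>\<^bsub>M\<^esub> x) ` (S +>\<^bsub>M\<^esub> x) <+>\<^bsub>M\<^esub> S"
    then obtain s t where st: "s \<in> S" "t \<in> S" "z = r \<odot>\<^bsub>M\<^esub> (s \<oplus>\<^bsub>M\<^esub> x) \<oplus>\<^bsub>M\<^esub> t"
      by (auto simp: set_add_def' a_r_coset_def')
    then have "z = (r \<odot>\<^bsub>M\<^esub> s \<oplus>\<^bsub>M\<^esub> t) \<oplus>\<^bsub>M\<^esub> r \<odot>\<^bsub>M\<^esub> x"
      using S.a_subset r x by (simp add: smult_r_distr subsetD a_ac)
    moreover have "r \<odot>\<^bsub>M\<^esub> s \<oplus>\<^bsub>M\<^esub> t \<in> S"
      using st r S by (simp add: submodule_add_closed submodule_smult_closed)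
    ultimately show "z \<in> S +>\<^bsub>M\<^esub> r \<odot>\<^bsub>M\<^esub> x" by (auto simp: a_r_coset_def')
  qed
  show "S +>\<^bsub>M\<^esub> r \<odot>\<^bsub>M\<^esub> x \<subseteq> (\<lambda>x. r \<odot>\<^bsub>M\<^esub> x) ` (S +>\<^bsub>M\<^esub> x) <+>\<^bsub>M\<^esub> S"
  proof
    fix z assume "z \<in> S +>\<^bsub>M\<^esub> r \<odot>\<^bsub>M\<^esub> x"
    then obtain t where t: "t \<in> S" "z = t \<oplus>\<^bsub>M\<^esub> r \<odot>\<^bsub>M\<^esub> x" by (auto simp: a_r_coset_def')
    then have "z = r \<odot>\<^bsub>M\<^esub> x \<oplus>\<^bsub>M\<^esub> t"
      using S.a_subset r x by (simp add: subsetD a_comm)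
    moreover have "r \<odot>\<^bsub>M\<^esub> x \<in> (\<lambda>x. r \<odot>\<^bsub>M\<^esub> x) ` (S +>\<^bsub>M\<^esub> x)"
      using S.a_rcos_self x by blast
    ultimately show "z \<in> (\<lambda>x. r \<odot>\<^bsub>M\<^esub> x) ` (S +>\<^bsub>M\<^esub> x) <+>\<^bsub>M\<^esub> S"
      using t(1) by (simp add: set_add_memI)
  qed
qed

lemma quot_add_inv_coset:
  "x \<in> carrier M \<Longrightarrow> inv\<^bsub>add_monoid (quot_module R M S)\<^esub> (S +>\<^bsub>M\<^esub> x) = S +>\<^bsub>M\<^esub> (\<ominus>\<^bsub>M\<^esub> x)"
  using S.a_inv_FactGroup S.a_rcos_inv S.a_subset
  by (simp add: quot_module_add_inv A_FactGroup_def' a_rcosetsI)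

lemma submodule_quot_image:
  assumes A: "submodule A R M"
  shows "submodule ((\<lambda>a. S +>\<^bsub>M\<^esub> a) ` A) R (quot_module R M S)"
proof (intro submodule.intro subgroup.intro submodule_axioms.intro)
  have A_carr: "\<And>a. a \<in> A \<Longrightarrow> a \<in> carrier M"
    using submodule_subset[OF A] by blast
  show "(\<lambda>a. S +>\<^bsub>M\<^esub> a) ` A \<subseteq> carrier (add_monoid (quot_module R M S))"
    using A_carr coset_in_quot_carrier by (simp add: image_subset_iff quot_module_simps)
  show "X \<otimes>\<^bsub>add_monoid (quot_module R M S)\<^esub> Y \<in> (\<lambda>a. S +>\<^bsub>M\<^esub> a) ` A"
    if XY: "X \<in> (\<lambda>a. S +>\<^bsub>M\<^esub> a) ` A" "Y \<in> (\<lambda>a. S +>\<^bsub>M\<^esub> a) ` A" for X Y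
  proof -
    obtain a b where "a \<in> A" "b \<in> A" "X = S +>\<^bsub>M\<^esub> a" "Y = S +>\<^bsub>M\<^esub> b"
      using XY by blast
    then show ?thesis
      using S.a_rcos_sum[of a b] A_carr submodule_add_closed[OF A, of a b]
      by (simp add: quot_module_simps)
  qed
  show "\<one>\<^bsub>add_monoid (quot_module R M S)\<^esub> \<in> (\<lambda>a. S +>\<^bsub>M\<^esub> a) ` A"
    using submodule_zero_closed[OF A] a_coset_add_zero[OF S.a_subset]
    by (simp add: quot_module_simps rev_image_eqI)
  show "inv\<^bsub>add_monoid (quot_module R M S)\<^esub> X \<in> (\<lambda>a. S +>\<^bsub>M\<^esub> a) ` A"
    if X: "X \<in> (\<lambda>a. S +>\<^bsub>M\<^esub> a) ` A" for X
  proof -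
    obtain a where "a \<in> A" "X = S +>\<^bsub>M\<^esub> a" using X by blast
    then show ?thesis
      using quot_add_inv_coset[of a] A_carr submodule_neg_closed[OF A, of a] by simp
  qed
  show "r \<odot>\<^bsub>quot_module R M S\<^esub> X \<in> (\<lambda>a. S +>\<^bsub>M\<^esub> a) ` A"
    if r: "r \<in> carrier R" and X: "X \<in> (\<lambda>a. S +>\<^bsub>M\<^esub> a) ` A" for r X
  proof -
    obtain a where "a \<in> A" "X = S +>\<^bsub>M\<^esub> a" using X by blast
    then show ?thesis
      using quot_smult_coset[OF r, of a] A_carr submodule_smult_closed[OF A r, of a] by simp
  qed
qed

lemma submodule_quot_preimage:
  assumes U: "submodule U R (quot_module R M S)"
  shows "submodule {x \<in> carrier M. S +>\<^bsub>M\<^esub> x \<in> U} R M"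
proof -
  interpret U: submodule U R "quot_module R M S" by (rule U)
  have smult: "S +>\<^bsub>M\<^esub> (r \<odot>\<^bsub>M\<^esub> x) \<in> U"
    if "r \<in> carrier R" "x \<in> carrier M" "S +>\<^bsub>M\<^esub> x \<in> U" for r x
    using U.smult_closed[of r "S +>\<^bsub>M\<^esub> x"] that by (simp add: quot_smult_coset)
  show ?thesis
  proof (rule submoduleI)
    show "\<zero>\<^bsub>M\<^esub> \<in> {x \<in> carrier M. S +>\<^bsub>M\<^esub> x \<in> U}"
      using U.one_closed S.a_subset by (simp add: quot_module_simps)
    show "a \<oplus>\<^bsub>M\<^esub> b \<in> {x \<in> carrier M. S +>\<^bsub>M\<^esub> x \<in> U}"
      if "a \<in> {x \<in> carrier M. S +>\<^bsub>M\<^esub> x \<in> U}" "b \<in> {x \<in> carrier M. S +>\<^bsub>M\<^esub> x \<in> U}"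
      for a b
      using that U.m_closed[of "S +>\<^bsub>M\<^esub> a" "S +>\<^bsub>M\<^esub> b"] S.a_rcos_sum[of a b]
      by (simp add: quot_module_simps)
    show "r \<odot>\<^bsub>M\<^esub> x \<in> {x \<in> carrier M. S +>\<^bsub>M\<^esub> x \<in> U}"
      if "r \<in> carrier R" "x \<in> {x \<in> carrier M. S +>\<^bsub>M\<^esub> x \<in> U}" for r x
      using that smult by simp
    show "\<ominus>\<^bsub>M\<^esub> x \<in> {x \<in> carrier M. S +>\<^bsub>M\<^esub> x \<in> U}"
      if "x \<in> {x \<in> carrier M. S +>\<^bsub>M\<^esub> x \<in> U}" for x
      using that smult[of "\<ominus> \<one>" x] by (simp add: smult_l_minus)
  qed auto
qed

lemma uniform_quot_module_sum_Int:
  assumes uniform: "uniform_module R (quot_module R M S)"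
    and A: "submodule A R M" "\<not> A \<subseteq> S" and B: "submodule B R M" "\<not> B \<subseteq> S"
  shows "\<not> (S <+>\<^bsub>M\<^esub> A) \<inter> B \<subseteq> S"
proof -
  let ?image = "\<lambda>P. (\<lambda>a. S +>\<^bsub>M\<^esub> a) ` P"
  have image_nonzero: "?image P \<noteq> {S}" if P: "submodule P R M" "\<not> P \<subseteq> S" for P
  proof -
    obtain p where "p \<in> P" "p \<notin> S" using P(2) by blast
    then have "S +>\<^bsub>M\<^esub> p \<in> ?image P" "S +>\<^bsub>M\<^esub> p \<noteq> S"
      using coset_eq_self_iff submodule_subset[OF P(1)] by auto
    then show ?thesis by blast
  qed
  have "?image A \<inter> ?image B \<noteq> {S}"
    using uniform_moduleD[OF uniform submodule_quot_image[OF A(1)] submodule_quot_image[OF B(1)]]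
      image_nonzero[OF A] image_nonzero[OF B]
    by (simp add: quot_module_simps)
  moreover have "S \<in> ?image A \<inter> ?image B"
    using submodule_zero_closed[OF A(1)] submodule_zero_closed[OF B(1)] a_coset_add_zero[OF S.a_subset]
    by (simp add: rev_image_eqI)
  ultimately obtain a b where ab: "a \<in> A" "b \<in> B" "S +>\<^bsub>M\<^esub> a = S +>\<^bsub>M\<^esub> b" "S +>\<^bsub>M\<^esub> b \<noteq> S"
    by blast
  have a_carr: "a \<in> carrier M" and b_carr: "b \<in> carrier M"
    using ab(1,2) submodule_subset[OF A(1)] submodule_subset[OF B(1)] by auto
  obtain t where t: "t \<in> S" "a = t \<oplus>\<^bsub>M\<^esub> b"
    using a_carr ab(3) by (rule coset_eqE)
  have t_carr: "t \<in> carrier M"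
    using t(1) S.a_subset by blast
  have "b = \<ominus>\<^bsub>M\<^esub> t \<oplus>\<^bsub>M\<^esub> a"
    using t_carr b_carr by (simp add: t(2) a_assoc[symmetric] M.l_neg)
  then have "b \<in> S <+>\<^bsub>M\<^esub> A"
    using set_add_memI[OF submodule_neg_closed[OF S t(1)] ab(1)] by simp
  moreover have "b \<notin> S"
    using ab(4) coset_eq_self_iff[OF b_carr] by simp
  ultimately show ?thesis
    using ab(2) by blast
qed

end

lemma large_submodule_mono:
  assumes A: "large_submodule R M A" and B: "submodule B R M" "A \<subseteq> B"
  shows "large_submodule R M B"
  unfolding large_submodule_def
proof (intro conjI allI impI B(1))
  fix L assume L: "submodule L R M \<and> L \<noteq> {\<zero>\<^bsub>M\<^esub>}"
  then have "A \<inter> L \<noteq> {\<zero>\<^bsub>M\<^esub>}" and A_sub: "submodule A R M"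
    using A by (auto simp: large_submodule_def)
  then obtain x where "x \<in> A \<inter> L" "x \<noteq> \<zero>\<^bsub>M\<^esub>"
    using L submodule_nonzero_iff submodule_Int by blast
  then show "B \<inter> L \<noteq> {\<zero>\<^bsub>M\<^esub>}"
    using B(2) by blast
qed

lemma MinSubD:
  assumes "S \<in> MinSub R M"
  shows "submodule S R M" "S \<noteq> {\<zero>\<^bsub>M\<^esub>}"
    and "\<And>K. submodule K R M \<Longrightarrow> K \<subseteq> S \<Longrightarrow> K \<noteq> {\<zero>\<^bsub>M\<^esub>} \<Longrightarrow> K = S"
  using assms by (auto simp: MinSub_def)

lemma MinSub_subset_if_Int:
  assumes S: "S \<in> MinSub R M" and P: "submodule P R M" and "P \<inter> S \<noteq> {\<zero>\<^bsub>M\<^esub>}"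
  shows "S \<subseteq> P"
proof -
  have "submodule (P \<inter> S) R M"
    using P MinSubD(1)[OF S] by (rule submodule_Int)
  then have "P \<inter> S = S"
    using MinSubD(3)[OF S] assms(3) by blast
  then show ?thesis by blast
qed

lemma MinSub_Int_eq_zero:
  assumes S1: "S1 \<in> MinSub R M" and S2: "S2 \<in> MinSub R M" and "S1 \<noteq> S2"
  shows "S1 \<inter> S2 = {\<zero>\<^bsub>M\<^esub>}"
  using MinSub_subset_if_Int[OF S1 MinSubD(1)[OF S2]] MinSub_subset_if_Int[OF S2 MinSubD(1)[OF S1]]
    assms(3) by (auto simp: Int_commute)

lemma MinSub_not_subset:
  assumes "S1 \<in> MinSub R M" "S2 \<in> MinSub R M" "S1 \<noteq> S2"
  shows "\<not> S2 \<subseteq> S1"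
  using MinSub_Int_eq_zero[OF assms] MinSubD(2)[OF assms(2)] MinSubD(1)[OF assms(2)]
  by (auto dest: submodule_zero_closed)

text \<open>If \<open>P = Ann\<^sub>M(I)\<close>, then \<open>r(a + b) = 0\<close> gives \<open>r a = - r b \<in> A \<inter> B = 0\<close> for all
  \<open>r \<in> I\<close>: a comultiplication module cannot mix the components of a direct sum.\<close>

lemma comultiplication_module_summand_mem:
  assumes comult: "comultiplication_module R M" and P: "submodule P R M"
    and A: "submodule A R M" and B: "submodule B R M" and disjoint: "A \<inter> B = {\<zero>\<^bsub>M\<^esub>}"
    and a: "a \<in> A" and b: "b \<in> B" and sum: "a \<oplus>\<^bsub>M\<^esub> b \<in> P"
  shows "a \<in> P"
proof -
  obtain I where I: "ideal I R" "P = AnnM M I"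
    using comult P by (auto simp: comultiplication_module_def)
  have a_carr: "a \<in> carrier M" and b_carr: "b \<in> carrier M"
    using a b submodule_subset[OF A] submodule_subset[OF B] by auto
  have "r \<odot>\<^bsub>M\<^esub> a = \<zero>\<^bsub>M\<^esub>" if r: "r \<in> I" for r
  proof -
    have r_carr: "r \<in> carrier R"
      using additive_subgroup.a_Hcarr[OF ideal.axioms(1)[OF I(1)] r] .
    have "r \<odot>\<^bsub>M\<^esub> (a \<oplus>\<^bsub>M\<^esub> b) = \<zero>\<^bsub>M\<^esub>"
      using sum r unfolding I(2) AnnM_def by blast
    then have "r \<odot>\<^bsub>M\<^esub> a \<oplus>\<^bsub>M\<^esub> r \<odot>\<^bsub>M\<^esub> b = \<zero>\<^bsub>M\<^esub>"
      by (simp add: smult_r_distr r_carr a_carr b_carr)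
    then have "r \<odot>\<^bsub>M\<^esub> a = \<ominus>\<^bsub>M\<^esub> (r \<odot>\<^bsub>M\<^esub> b)"
      using M.minus_equality[of "r \<odot>\<^bsub>M\<^esub> a" "r \<odot>\<^bsub>M\<^esub> b"] r_carr a_carr b_carr by simp
    moreover have "r \<odot>\<^bsub>M\<^esub> a \<in> A" "\<ominus>\<^bsub>M\<^esub> (r \<odot>\<^bsub>M\<^esub> b) \<in> B"
      using submodule_smult_closed[OF A r_carr a] submodule_neg_closed[OF B submodule_smult_closed[OF B r_carr b]]
      by auto
    ultimately have "r \<odot>\<^bsub>M\<^esub> a \<in> A \<inter> B"
      by simp
    then show ?thesis
      using disjoint by simp
  qed
  then show ?thesis
    using I(2) a_carr by (simp add: AnnM_def)
qed

lemma LSG_empty_vertex_MinSub: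
  assumes empty: "LSG_empty R M" and V: "V \<in> LSG_vertices R M"
  shows "V \<in> MinSub R M"
proof -
  have V_sub: "submodule V R M" and "V \<noteq> {\<zero>\<^bsub>M\<^esub>}" and V_small: "\<not> large_submodule R M V"
    using V by (auto simp: LSG_vertices_def)
  moreover have "K = V" if K: "submodule K R M" "K \<subseteq> V" "K \<noteq> {\<zero>\<^bsub>M\<^esub>}" for K
  proof (rule ccontr)
    assume "K \<noteq> V"
    moreover have "K \<in> LSG_vertices R M"
      using K V_small large_submodule_mono[OF _ V_sub K(2)] by (auto simp: LSG_vertices_def)
    moreover have "K <+>\<^bsub>M\<^esub> V = V"
      using set_add_absorb[OF K(1) V_sub K(2)] .
    ultimately have "LSG_adj R M K V"
      using V V_small by (simp add: LSG_adj_def)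
    then show False
      using empty by (simp add: LSG_empty_def)
  qed
  ultimately show ?thesis
    by (simp add: MinSub_def)
qed

text \<open>The preimage of a non-zero submodule of \<open>M/S\<^sub>1\<close> properly contains the minimal
  submodule \<open>S\<^sub>1\<close>, so it is not a vertex, i.e. it is large, and hence contains \<open>S\<^sub>2\<close>.\<close>

lemma LSG_empty_quot_submodule_coset_mem:
  assumes empty: "LSG_empty R M" and S1: "S1 \<in> MinSub R M" and S2: "S2 \<in> MinSub R M"
    and l: "l \<in> S2" and U: "submodule U R (quot_module R M S1)" "U \<noteq> {S1}"
  shows "S1 +>\<^bsub>M\<^esub> l \<in> U"
proof -
  note S1_sub = MinSubD(1)[OF S1]
  interpret U: submodule U R "quot_module R M S1" by (rule U(1))
  have "S1 \<in> U"
    using U.one_closed by (simp add: quot_module_simps)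
  then obtain X where X: "X \<in> U" "X \<noteq> S1"
    using U(2) by blast
  have "X \<in> a_rcosets\<^bsub>M\<^esub> S1"
    using X(1) U.subset by (auto simp: quot_module_simps)
  then obtain a where a: "a \<in> carrier M" "X = S1 +>\<^bsub>M\<^esub> a"
    unfolding A_RCOSETS_def' by blast
  define A where "A = {x \<in> carrier M. S1 +>\<^bsub>M\<^esub> x \<in> U}"
  have A_sub: "submodule A R M"
    unfolding A_def using S1_sub U(1) by (rule submodule_quot_preimage)
  have "S1 \<subseteq> A"
  proof
    fix s assume "s \<in> S1"
    moreover have "s \<in> carrier M"
      using \<open>s \<in> S1\<close> submodule_subset[OF S1_sub] by blast
    moreover have "S1 +>\<^bsub>M\<^esub> s = S1"
      using calculation coset_eq_self_iff[OF S1_sub] by blast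
    ultimately show "s \<in> A"
      using \<open>S1 \<in> U\<close> by (simp add: A_def)
  qed
  moreover have "a \<in> A" "a \<notin> S1"
    using a X coset_eq_self_iff[OF S1_sub a(1)] by (simp_all add: A_def)
  ultimately have "A \<noteq> {\<zero>\<^bsub>M\<^esub>}" "A \<notin> MinSub R M"
    using MinSubD(2)[OF S1] MinSubD(3)[of A S1] submodule_zero_closed[OF S1_sub] S1_sub by blast+
  then have "large_submodule R M A"
    using LSG_empty_vertex_MinSub[OF empty, of A] A_sub by (auto simp: LSG_vertices_def)
  then have "A \<inter> S2 \<noteq> {\<zero>\<^bsub>M\<^esub>}"
    using MinSubD(1,2)[OF S2] by (simp add: large_submodule_def)
  then have "S2 \<subseteq> A"
    using MinSub_subset_if_Int[OF S2 A_sub] by blast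
  then show ?thesis
    using l by (auto simp: A_def)
qed

lemma LSG_empty_quot_uniform_finitely_cogenerated:
  assumes empty: "LSG_empty R M" and S1: "S1 \<in> MinSub R M" and S2: "S2 \<in> MinSub R M"
    and "S1 \<noteq> S2"
  shows "uniform_module R (quot_module R M S1) \<and> finitely_cogenerated R (quot_module R M S1)"
proof -
  note S1_sub = MinSubD(1)[OF S1]
  obtain l where l: "l \<in> S2" "l \<notin> S1"
    using MinSub_not_subset[OF S1 S2 \<open>S1 \<noteq> S2\<close>] by blast
  have l_carr: "l \<in> carrier M"
    using l(1) submodule_subset[OF MinSubD(1)[OF S2]] by blast
  have "S1 +>\<^bsub>M\<^esub> l \<noteq> \<zero>\<^bsub>quot_module R M S1\<^esub>"
    using l(2) coset_eq_self_iff[OF S1_sub l_carr] by (simp add: quot_module_simps)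
  moreover have "S1 +>\<^bsub>M\<^esub> l \<in> U"
    if "submodule U R (quot_module R M S1)" "U \<noteq> {\<zero>\<^bsub>quot_module R M S1\<^esub>}" for U
    using LSG_empty_quot_submodule_coset_mem[OF empty S1 S2 l(1)] that
    by (simp add: quot_module_simps)
  ultimately show ?thesis
    using coset_in_quot_carrier[OF S1_sub l_carr]
    by (auto intro: uniform_module_if_common_nonzero finitely_cogenerated_if_common_nonzero)
qed

lemma LSG_empty_imp_MinSub_pair:
  assumes comult: "comultiplication_module R M" and nonnull: "LSG_nonnull R M"
    and empty: "LSG_empty R M"
  shows "\<exists>S1 S2. MinSub R M = {S1, S2} \<and> S1 \<noteq> S2 \<and>
    finitely_cogenerated R (quot_module R M S1) \<and> uniform_module R (quot_module R M S1) \<and>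
    finitely_cogenerated R (quot_module R M S2) \<and> uniform_module R (quot_module R M S2)"
proof -
  obtain V where V: "V \<in> LSG_vertices R M"
    using nonnull by (auto simp: LSG_nonnull_def)
  then obtain L where L: "submodule L R M" "L \<noteq> {\<zero>\<^bsub>M\<^esub>}" "V \<inter> L = {\<zero>\<^bsub>M\<^esub>}"
    by (auto simp: LSG_vertices_def large_submodule_def)
  have V_sub: "submodule V R M" "V \<noteq> {\<zero>\<^bsub>M\<^esub>}"
    using V by (auto simp: LSG_vertices_def)
  have "\<not> large_submodule R M L"
    using V_sub L(3) by (auto simp: large_submodule_def Int_commute)
  then have L_vertex: "L \<in> LSG_vertices R M"
    using L by (simp add: LSG_vertices_def)
  have "V \<noteq> L"
    using L V_sub(2) by auto
  have V_min: "V \<in> MinSub R M" and L_min: "L \<in> MinSub R M"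
    using LSG_empty_vertex_MinSub[OF empty] V L_vertex by auto
  have large: "large_submodule R M (V <+>\<^bsub>M\<^esub> L)"
    using empty V L_vertex \<open>V \<noteq> L\<close> by (auto simp: LSG_empty_def LSG_adj_def)
  have "S \<in> {V, L}" if S: "S \<in> MinSub R M" for S
  proof (rule ccontr)
    assume "S \<notin> {V, L}"
    then have SV: "S \<inter> V = {\<zero>\<^bsub>M\<^esub>}" and SL: "S \<inter> L = {\<zero>\<^bsub>M\<^esub>}"
      using MinSub_Int_eq_zero[OF S V_min] MinSub_Int_eq_zero[OF S L_min] by auto
    have "(V <+>\<^bsub>M\<^esub> L) \<inter> S \<noteq> {\<zero>\<^bsub>M\<^esub>}"
      using large MinSubD(1,2)[OF S] by (simp add: large_submodule_def)
    then obtain x where x: "x \<in> V <+>\<^bsub>M\<^esub> L" "x \<in> S" "x \<noteq> \<zero>\<^bsub>M\<^esub>"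
      using submodule_nonzero_iff[OF submodule_Int[OF submodule_set_add[OF V_sub(1) L(1)] MinSubD(1)[OF S]]]
      by blast
    from x(1) obtain v l where vl: "v \<in> V" "l \<in> L" "x = v \<oplus>\<^bsub>M\<^esub> l"
      by (rule set_add_memE)
    have "v \<in> carrier M" "l \<in> carrier M"
      using vl submodule_subset[OF V_sub(1)] submodule_subset[OF L(1)] by auto
    then have "x = l \<oplus>\<^bsub>M\<^esub> v"
      using vl(3) a_comm by simp
    then have "l \<in> S"
      using comultiplication_module_summand_mem[OF comult MinSubD(1)[OF S] L(1) V_sub(1) _ vl(2,1)]
        L(3) x(2) by (simp add: Int_commute)
    moreover have "v \<in> S"
      using comultiplication_module_summand_mem[OF comult MinSubD(1)[OF S] V_sub(1) L(1) L(3) vl(1,2)]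
        x(2) vl(3) by simp
    ultimately have "v = \<zero>\<^bsub>M\<^esub>" "l = \<zero>\<^bsub>M\<^esub>"
      using SV SL vl(1,2) by blast+
    then show False
      using vl(3) x(3) by simp
  qed
  then have "MinSub R M = {V, L}"
    using V_min L_min by (intro equalityI subsetI) auto
  then show ?thesis
    using \<open>V \<noteq> L\<close> LSG_empty_quot_uniform_finitely_cogenerated[OF empty V_min L_min \<open>V \<noteq> L\<close>]
      LSG_empty_quot_uniform_finitely_cogenerated[OF empty L_min V_min \<open>V \<noteq> L\<close>[symmetric]]
    by blast
qed

lemma MinSub_subset_of_disjoint:
  assumes comult: "comultiplication_module R M"
    and S1: "S1 \<in> MinSub R M" and S2: "S2 \<in> MinSub R M" and "S1 \<noteq> S2"
    and uniform: "uniform_module R (quot_module R M S1)"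
    and P: "submodule P R M" "P \<noteq> {\<zero>\<^bsub>M\<^esub>}" and disjoint: "P \<inter> S1 = {\<zero>\<^bsub>M\<^esub>}"
  shows "S2 \<subseteq> P"
proof -
  note S1_sub = MinSubD(1)[OF S1] and S2_sub = MinSubD(1)[OF S2]
  have "\<not> P \<subseteq> S1"
    using P(2) disjoint by blast
  then obtain s where s: "s \<in> S1 <+>\<^bsub>M\<^esub> P" "s \<in> S2" "s \<notin> S1"
    using uniform_quot_module_sum_Int[OF S1_sub uniform P(1) _ S2_sub]
      MinSub_not_subset[OF S1 S2 \<open>S1 \<noteq> S2\<close>] by blast
  from s(1) obtain t p where tp: "t \<in> S1" "p \<in> P" "s = t \<oplus>\<^bsub>M\<^esub> p"
    by (rule set_add_memE)
  have t_carr: "t \<in> carrier M" and p_carr: "p \<in> carrier M"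
    using tp(1,2) submodule_subset[OF S1_sub] submodule_subset[OF P(1)] by auto
  have "\<ominus>\<^bsub>M\<^esub> t \<oplus>\<^bsub>M\<^esub> s = p"
    using t_carr p_carr by (simp add: tp(3) a_assoc[symmetric] M.l_neg)
  then have "\<ominus>\<^bsub>M\<^esub> t \<in> P"
    using comultiplication_module_summand_mem[OF comult P(1) S1_sub S2_sub
        MinSub_Int_eq_zero[OF S1 S2 \<open>S1 \<noteq> S2\<close>] submodule_neg_closed[OF S1_sub tp(1)] s(2)]
      tp(2) by simp
  then have "\<ominus>\<^bsub>M\<^esub> t = \<zero>\<^bsub>M\<^esub>"
    using disjoint submodule_neg_closed[OF S1_sub tp(1)] by blast
  then have "s = p"
    using \<open>\<ominus>\<^bsub>M\<^esub> t \<oplus>\<^bsub>M\<^esub> s = p\<close> s(2) submodule_subset[OF S2_sub] by auto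
  then have "s \<in> P \<inter> S2" "s \<noteq> \<zero>\<^bsub>M\<^esub>"
    using tp(2) s(2,3) submodule_zero_closed[OF S1_sub] by auto
  then have "P \<inter> S2 \<noteq> {\<zero>\<^bsub>M\<^esub>}"
    by blast
  then show ?thesis
    using MinSub_subset_if_Int[OF S2 P(1)] by blast
qed

lemma MinSub_subset_of_proper_supset:
  assumes S1: "S1 \<in> MinSub R M" and S2: "S2 \<in> MinSub R M" and "S1 \<noteq> S2"
    and uniform: "uniform_module R (quot_module R M S1)"
    and V: "submodule V R M" "S1 \<subseteq> V" "V \<noteq> S1"
  shows "S2 \<subseteq> V"
proof -
  note S1_sub = MinSubD(1)[OF S1] and S2_sub = MinSubD(1)[OF S2]
  have "\<not> V \<subseteq> S1"
    using V(2,3) by blast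
  then obtain s where s: "s \<in> S1 <+>\<^bsub>M\<^esub> V" "s \<in> S2" "s \<notin> S1"
    using uniform_quot_module_sum_Int[OF S1_sub uniform V(1) _ S2_sub]
      MinSub_not_subset[OF S1 S2 \<open>S1 \<noteq> S2\<close>] by blast
  then have "s \<in> V \<inter> S2" "s \<noteq> \<zero>\<^bsub>M\<^esub>"
    using set_add_absorb[OF S1_sub V(1,2)] submodule_zero_closed[OF S1_sub] by auto
  then have "V \<inter> S2 \<noteq> {\<zero>\<^bsub>M\<^esub>}"
    by blast
  then show ?thesis
    using MinSub_subset_if_Int[OF S2 V(1)] by blast
qed

lemma MinSub_subset_of_nonzero:
  assumes comult: "comultiplication_module R M"
    and S1: "S1 \<in> MinSub R M" and S2: "S2 \<in> MinSub R M" and "S1 \<noteq> S2"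
    and uniform: "uniform_module R (quot_module R M S1)"
    and P: "submodule P R M" "P \<noteq> {\<zero>\<^bsub>M\<^esub>}"
  shows "S1 \<subseteq> P \<or> S2 \<subseteq> P"
proof (cases "P \<inter> S1 = {\<zero>\<^bsub>M\<^esub>}")
  case True
  then show ?thesis
    using MinSub_subset_of_disjoint[OF comult S1 S2 \<open>S1 \<noteq> S2\<close> uniform P] by blast
next
  case False
  then show ?thesis
    using MinSub_subset_if_Int[OF S1 P(1)] by blast
qed

lemma large_submodule_MinSub_sum:
  assumes comult: "comultiplication_module R M"
    and S1: "S1 \<in> MinSub R M" and S2: "S2 \<in> MinSub R M" and "S1 \<noteq> S2"
    and uniform: "uniform_module R (quot_module R M S1)"
  shows "large_submodule R M (S1 <+>\<^bsub>M\<^esub> S2)"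
  unfolding large_submodule_def
proof (intro conjI allI impI)
  note S1_sub = MinSubD(1)[OF S1] and S2_sub = MinSubD(1)[OF S2]
  show "submodule (S1 <+>\<^bsub>M\<^esub> S2) R M"
    using S1_sub S2_sub by (rule submodule_set_add)
  fix L assume L: "submodule L R M \<and> L \<noteq> {\<zero>\<^bsub>M\<^esub>}"
  have "S1 \<subseteq> S1 <+>\<^bsub>M\<^esub> S2" "S2 \<subseteq> S1 <+>\<^bsub>M\<^esub> S2"
    using set_add_upper1[OF S2_sub] set_add_upper2[OF S1_sub] submodule_subset[OF S1_sub]
      submodule_subset[OF S2_sub] by auto
  moreover have "S1 \<subseteq> L \<or> S2 \<subseteq> L"
    using MinSub_subset_of_nonzero[OF comult S1 S2 \<open>S1 \<noteq> S2\<close> uniform] L by blast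
  ultimately show "(S1 <+>\<^bsub>M\<^esub> S2) \<inter> L \<noteq> {\<zero>\<^bsub>M\<^esub>}"
    using MinSubD(2)[OF S1] MinSubD(2)[OF S2] submodule_zero_closed[OF S1_sub]
      submodule_zero_closed[OF S2_sub] by blast
qed

lemma LSG_vertex_MinSub_cases:
  assumes comult: "comultiplication_module R M"
    and S1: "S1 \<in> MinSub R M" and S2: "S2 \<in> MinSub R M" and "S1 \<noteq> S2"
    and uniform1: "uniform_module R (quot_module R M S1)"
    and uniform2: "uniform_module R (quot_module R M S2)"
    and V: "V \<in> LSG_vertices R M"
  shows "V = S1 \<or> V = S2"
proof (rule ccontr)
  assume other: "\<not> (V = S1 \<or> V = S2)"
  have V_sub: "submodule V R M" "V \<noteq> {\<zero>\<^bsub>M\<^esub>}" and V_small: "\<not> large_submodule R M V"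
    using V by (auto simp: LSG_vertices_def)
  have "S1 \<subseteq> V \<or> S2 \<subseteq> V"
    using MinSub_subset_of_nonzero[OF comult S1 S2 \<open>S1 \<noteq> S2\<close> uniform1 V_sub] .
  then have "S1 \<subseteq> V" "S2 \<subseteq> V"
    using MinSub_subset_of_proper_supset[OF S1 S2 \<open>S1 \<noteq> S2\<close> uniform1 V_sub(1)]
      MinSub_subset_of_proper_supset[OF S2 S1 \<open>S1 \<noteq> S2\<close>[symmetric] uniform2 V_sub(1)] other
    by blast+
  then have "S1 <+>\<^bsub>M\<^esub> S2 \<subseteq> V"
    using V_sub(1) by (rule set_add_least[rotated])
  then show False
    using large_submodule_mono[OF large_submodule_MinSub_sum[OF comult S1 S2 \<open>S1 \<noteq> S2\<close> uniform1]
        V_sub(1)] V_small by blast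
qed

lemma LSG_empty_if_uniform_quotients:
  assumes comult: "comultiplication_module R M"
    and S1: "S1 \<in> MinSub R M" and S2: "S2 \<in> MinSub R M" and "S1 \<noteq> S2"
    and uniform1: "uniform_module R (quot_module R M S1)"
    and uniform2: "uniform_module R (quot_module R M S2)"
  shows "LSG_empty R M"
  unfolding LSG_empty_def
proof (intro allI notI)
  fix N K assume "LSG_adj R M N K"
  then have "N \<in> LSG_vertices R M" "K \<in> LSG_vertices R M" "N \<noteq> K"
    and small: "\<not> large_submodule R M (N <+>\<^bsub>M\<^esub> K)"
    by (auto simp: LSG_adj_def)
  then have "N <+>\<^bsub>M\<^esub> K = S1 <+>\<^bsub>M\<^esub> S2"
    using LSG_vertex_MinSub_cases[OF comult S1 S2 \<open>S1 \<noteq> S2\<close> uniform1 uniform2]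
      set_add_commute[OF submodule_subset[OF MinSubD(1)[OF S1]] submodule_subset[OF MinSubD(1)[OF S2]]]
    by blast
  then show False
    using small large_submodule_MinSub_sum[OF comult S1 S2 \<open>S1 \<noteq> S2\<close> uniform1] by simp
qed

end

theorem theorem2p5:
  fixes R :: "'a ring" and M :: "('a, 'b) module"
  assumes "module R M"
    and "carrier M \<noteq> {\<zero>\<^bsub>M\<^esub>}"
    and "comultiplication_module R M"
    and "LSG_nonnull R M"
  shows "LSG_empty R M \<longleftrightarrow>
    (\<exists>S1 S2. MinSub R M = {S1, S2} \<and> S1 \<noteq> S2 \<and>
       finitely_cogenerated R (quot_module R M S1) \<and> uniform_module R (quot_module R M S1) \<and>
       finitely_cogenerated R (quot_module R M S2) \<and> uniform_module R (quot_module R M S2))"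
proof -
  interpret module R M by fact
  show ?thesis
    using LSG_empty_imp_MinSub_pair[OF assms(3,4)]
    by (auto intro: LSG_empty_if_uniform_quotients[OF assms(3)])
qed

end
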